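(* Let $\mathbf{F}$ be a field of characteristic $3$, let $\lambda=(\lambda_1,\lambda_2)$ be a partition and let $u\in\mathbf{N}$ satisfy $3^u\le\lambda_2$. Then the $\mathbf{F}$-span of $\{b(k):0\le k<3^u\}$ is a subalgebra of $S_\mathbf{F}(\lambda)$.
   Context: $S_\mathbf{F}(\lambda)=\operatorname{End}_{\mathbf{F}S_r}(M^\lambda)$ ($M^\lambda$ the permutation module on cosets of $S_{\lambda_1}\times S_{\lambda_2}$) is a commutative $\mathbf{F}$-algebra with basis $b(0)=\mathbf{1},b(1),\dots,b(\lambda_2)$ and multiplication $b(i)b(j)=\sum_{h=\max\{i,j\}}^{i+j}\binom{h}{i}\binom{h}{j}\binom{m+i+j}{i+j-h}b(h)$, where $m=\lambda_1-\lambda_2$ and $b(a)=0$ for $a>\lambda_2$. *)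

theory Defs
  imports Main
begin

text \<open>Model of the algebra S_F(lambda), lambda = (l1,l2), l1 >= l2, in coordinates with
  respect to the basis b(0),...,b(l2): an element is a function v :: nat => F with
  v k = 0 for k > l2 (v k is the coefficient of b(k)).\<close>

definition schur_coef :: "nat \<Rightarrow> nat \<Rightarrow> nat \<Rightarrow> nat \<Rightarrow> nat" where
  "schur_coef m i j h =
     (if max i j \<le> h \<and> h \<le> i + j
      then (h choose i) * (h choose j) * ((m + i + j) choose (i + j - h)) else 0)"

definition schur_carrier :: "nat \<Rightarrow> (nat \<Rightarrow> 'a::field) set" where
  "schur_carrier l2 = {v. \<forall>k>l2. v k = 0}"

definition schur_b :: "nat \<Rightarrow> nat \<Rightarrow> (nat \<Rightarrow> 'a::field)" where
  "schur_b l2 a = (\<lambda>k. if k = a \<and> a \<le> l2 then 1 else 0)"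

definition schur_mult :: "nat \<Rightarrow> nat \<Rightarrow> (nat \<Rightarrow> 'a::field) \<Rightarrow> (nat \<Rightarrow> 'a) \<Rightarrow> (nat \<Rightarrow> 'a)" where
  "schur_mult l1 l2 v w =
     (\<lambda>h. if h \<le> l2
          then (\<Sum>i\<le>l2. \<Sum>j\<le>l2. v i * w j * of_nat (schur_coef (l1 - l2) i j h))
          else 0)"

definition lin_span :: "(nat \<Rightarrow> 'a::field) set \<Rightarrow> (nat \<Rightarrow> 'a) set" where
  "lin_span V = {v. \<exists>A c. finite A \<and> A \<subseteq> V \<and> v = (\<lambda>k. \<Sum>x\<in>A. c x * x k)}"

definition schur_subalgebra :: "nat \<Rightarrow> nat \<Rightarrow> (nat \<Rightarrow> 'a::field) set \<Rightarrow> bool" where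
  "schur_subalgebra l1 l2 W \<longleftrightarrow>
     W \<subseteq> schur_carrier l2 \<and>
     schur_b l2 0 \<in> W \<and>
     (\<forall>v\<in>W. \<forall>w\<in>W. (\<lambda>k. v k + w k) \<in> W) \<and>
     (\<forall>c. \<forall>v\<in>W. (\<lambda>k. c * v k) \<in> W) \<and>
     (\<forall>v\<in>W. \<forall>w\<in>W. schur_mult l1 l2 v w \<in> W)"

end

theory Submission
  imports Defs "HOL-Computational_Algebra.Primes"
begin

text \<open>The structure constant of b(h) in b(i) b(j) contains the factor (h choose i).  If
  i, j < p^u \<le> h \<le> i + j, Vandermonde's identity splits h = p^u + (h - p^u) and writes
  (h choose i) as a sum of products (p^u choose k) (h - p^u choose i - k); every term is
  divisible by p, because p divides (p^u choose k) for 0 < k < p^u, and the term k = 0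
  vanishes since i > h - p^u.  Hence in characteristic p the product of two elements of
  the span of b(0), ..., b(p^u - 1) has no component beyond b(p^u - 1).\<close>

lemma prime_dvd_choose_prime_power:
  fixes p :: nat
  assumes "prime p" "0 < k" "k < p ^ u"
  shows "p dvd (p ^ u choose k)"
proof (rule ccontr)
  assume "\<not> p dvd (p ^ u choose k)"
  then have "coprime (p ^ u) (p ^ u choose k)"
    using assms(1) by (simp add: prime_imp_coprime)
  moreover have "p ^ u dvd k * (p ^ u choose k)"
    using times_binomial_minus1_eq[OF assms(2), of "p ^ u"] by simp
  ultimately have "p ^ u dvd k"
    by (simp add: coprime_dvd_mult_left_iff)
  with assms(2,3) show False
    using nat_dvd_not_less by blast
qed

lemma prime_dvd_choose_window:
  fixes p :: nat
  assumes "prime p" "p ^ u \<le> h" "h - p ^ u < i" "i < p ^ u"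
  shows "p dvd (h choose i)"
proof -
  have "h choose i = (\<Sum>k\<le>i. (p ^ u choose k) * ((h - p ^ u) choose (i - k)))"
    using vandermonde[of "p ^ u" "h - p ^ u" i] assms(2) by simp
  also have "p dvd \<dots>"
  proof (rule dvd_sum)
    fix k assume "k \<in> {..i}"
    then show "p dvd (p ^ u choose k) * ((h - p ^ u) choose (i - k))"
      using assms prime_dvd_choose_prime_power[of p k u]
      by (cases "k = 0") (auto simp: binomial_eq_0)
  qed
  finally show ?thesis .
qed

lemma prime_dvd_schur_coef:
  fixes p :: nat
  assumes "prime p" "i < p ^ u" "j < p ^ u" "p ^ u \<le> h"
  shows "p dvd schur_coef m i j h"
proof (cases "max i j \<le> h \<and> h \<le> i + j")
  case True
  then have "p dvd (h choose i)"
    using assms prime_dvd_choose_window[of p u h i] by auto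
  then show ?thesis
    using True by (simp add: schur_coef_def)
next
  case False
  then show ?thesis
    by (simp only: schur_coef_def if_False dvd_0_right)
qed

lemma lin_span_schur_b_initial:
  assumes "n \<le> Suc l2"
  shows "lin_span {schur_b l2 k :: nat \<Rightarrow> 'a::field | k. k < n} = {v. \<forall>k\<ge>n. v k = 0}"
    (is "lin_span ?V = ?T")
proof
  show "lin_span ?V \<subseteq> ?T"
  proof
    fix v assume "v \<in> lin_span ?V"
    then obtain A c where A: "A \<subseteq> ?V" and v: "v = (\<lambda>k. \<Sum>x\<in>A. c x * x k)"
      unfolding lin_span_def by blast
    have "x k = 0" if "x \<in> A" "n \<le> k" for x k
      using that A by (auto simp: schur_b_def)
    then show "v \<in> ?T"
      by (simp add: v sum.neutral)
  qed
next
  show "?T \<subseteq> lin_span ?V"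
  proof
    fix v :: "nat \<Rightarrow> 'a" assume v: "v \<in> ?T"
    let ?B = "schur_b l2 :: nat \<Rightarrow> nat \<Rightarrow> 'a"
    have inj: "inj_on ?B {..<n}"
    proof (rule inj_onI)
      fix x y assume "x \<in> {..<n}" "y \<in> {..<n}" "?B x = ?B y"
      then have "?B x x = ?B y x" by simp
      with \<open>x \<in> {..<n}\<close> \<open>y \<in> {..<n}\<close> show "x = y"
        using assms by (auto simp: schur_b_def split: if_splits)
    qed
    define c where "c x = v (inv_into {..<n} ?B x)" for x
    have "v k = (\<Sum>x\<in>?B ` {..<n}. c x * x k)" for k
    proof -
      have "(\<Sum>x\<in>?B ` {..<n}. c x * x k) = (\<Sum>j<n. v j * ?B j k)"
        using inj by (simp add: sum.reindex c_def)
      also have "\<dots> = (\<Sum>j<n. if j = k then v j else 0)"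
        using assms by (intro sum.cong) (auto simp: schur_b_def)
      also have "\<dots> = v k"
        using v by (auto simp: sum.delta)
      finally show ?thesis by simp
    qed
    moreover have "?B ` {..<n} \<subseteq> ?V" by auto
    ultimately show "v \<in> lin_span ?V"
      unfolding lin_span_def by (intro CollectI exI[of _ "?B ` {..<n}"] exI[of _ c]) auto
  qed
qed

lemma schur_subalgebra_truncation:
  assumes "0 < n" "n \<le> Suc l2"
    and coef_vanish: "\<And>i j h. i < n \<Longrightarrow> j < n \<Longrightarrow> n \<le> h \<Longrightarrow>
      (of_nat (schur_coef (l1 - l2) i j h) :: 'a::field) = 0"
  shows "schur_subalgebra l1 l2 {v :: nat \<Rightarrow> 'a. \<forall>k\<ge>n. v k = 0}"
  unfolding schur_subalgebra_def
proof (intro conjI ballI allI)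
  fix v w :: "nat \<Rightarrow> 'a"
  assume v: "v \<in> {v. \<forall>k\<ge>n. v k = 0}" and w: "w \<in> {v. \<forall>k\<ge>n. v k = 0}"
  have "v i * w j * of_nat (schur_coef (l1 - l2) i j h) = 0" if "n \<le> h" for i j h
    using v w coef_vanish[OF _ _ that, of i j] by (cases "i < n \<and> j < n") auto
  then show "schur_mult l1 l2 v w \<in> {v. \<forall>k\<ge>n. v k = 0}"
    by (simp add: schur_mult_def sum.neutral)
qed (use assms in \<open>auto simp: schur_carrier_def schur_b_def\<close>)

theorem lemma3p2:
  fixes l1 l2 u :: nat
  assumes "CHAR('a::field) = 3"
    and "l2 \<le> l1"
    and "3 ^ u \<le> l2"
  shows "schur_subalgebra l1 l2 (lin_span {schur_b l2 k :: nat \<Rightarrow> 'a | k. k < 3 ^ u})"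
proof -
  have "(of_nat (schur_coef (l1 - l2) i j h) :: 'a) = 0"
    if "i < 3 ^ u" "j < 3 ^ u" "3 ^ u \<le> h" for i j h
    using prime_dvd_schur_coef[of 3 i u j h "l1 - l2"] that assms(1)
    by (simp add: of_nat_eq_0_iff_char_dvd)
  then have "schur_subalgebra l1 l2 {v :: nat \<Rightarrow> 'a. \<forall>k\<ge>3 ^ u. v k = 0}"
    using assms(3) by (intro schur_subalgebra_truncation) auto
  then show ?thesis
    using assms(3) by (simp add: lin_span_schur_b_initial)
qed

end
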